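(* Let $\Gamma$ be a cubic distance-regular graph with at least $10$ vertices, diameter at least $3$, intersection number $b_2=2$ and girth $g(\Gamma)\ge7$, and let $(u_{ij})$ be the generators of $C(G_{aut}^+(\Gamma))$. Let $i,j,k,l$ be vertices with $d(i,k)=d(j,l)=3$. Let $x$ be the unique neighbor of $j$ with $d(x,l)=2$, and let $q$ be the unique neighbor of $x$ with $d(q,j)=2$ and $d(q,l)=3$. Then $$u_{ij}u_{kl}=u_{ij}u_{kl}(u_{ij}+u_{iq}).$$
   Context: A connected regular graph $\Gamma=(V,E)$ of diameter $D$ is distance-regular with intersection array $\{b_0,\dots,b_{D-1};c_1,\dots,c_D\}$ if for any vertices $v,w$ with $d(v,w)=i$, exactly $b_i$ neighbors of $w$ are at distance $i+1$ from $v$ and exactly $c_i$ neighbors of $w$ are at distance $i-1$ from $v$ ($d$ the graph distance). Cubic means $3$-regular; the girth is the length of a shortest cycle. $C(G_{aut}^+(\Gamma))$ is the universal unital $C^*$-algebra generated by $u_{ij}$, $i,j\in V=\{1,\dots,n\}$, with relations: (R1) $u_{ij}=u_{ij}^*=u_{ij}^2$; (R2) $\sum_{l} u_{il}=1=\sum_{l} u_{li}$ for all $i$; (R3) $u_{ij}u_{kl}=u_{kl}u_{ij}=0$ whenever exactly one of $(i,k)\in E$, $(j,l)\in E$ holds. *)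

theory Defs
  imports "HOL-Analysis.Analysis"
begin

definition simple_graph :: "'v set \<Rightarrow> ('v \<Rightarrow> 'v \<Rightarrow> bool) \<Rightarrow> bool" where
  "simple_graph V E \<longleftrightarrow> finite V \<and> (\<forall>a b. E a b \<longrightarrow> a \<in> V \<and> b \<in> V) \<and>
     (\<forall>a b. E a b \<longrightarrow> E b a) \<and> (\<forall>a. \<not> E a a)"

definition connected_graph :: "'v set \<Rightarrow> ('v \<Rightarrow> 'v \<Rightarrow> bool) \<Rightarrow> bool" where
  "connected_graph V E \<longleftrightarrow> (\<forall>v\<in>V. \<forall>w\<in>V. \<exists>k. (E ^^ k) v w)"

definition gdist :: "('v \<Rightarrow> 'v \<Rightarrow> bool) \<Rightarrow> 'v \<Rightarrow> 'v \<Rightarrow> nat" where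
  "gdist E v w = (LEAST k. (E ^^ k) v w)"

definition regular_graph :: "'v set \<Rightarrow> ('v \<Rightarrow> 'v \<Rightarrow> bool) \<Rightarrow> nat \<Rightarrow> bool" where
  "regular_graph V E d \<longleftrightarrow> (\<forall>v\<in>V. card {w\<in>V. E v w} = d)"

definition diameter :: "'v set \<Rightarrow> ('v \<Rightarrow> 'v \<Rightarrow> bool) \<Rightarrow> nat" where
  "diameter V E = Max {gdist E v w | v w. v \<in> V \<and> w \<in> V}"

definition intersection_numbers ::
  "'v set \<Rightarrow> ('v \<Rightarrow> 'v \<Rightarrow> bool) \<Rightarrow> (nat \<Rightarrow> nat) \<Rightarrow> (nat \<Rightarrow> nat) \<Rightarrow> bool" where
  "intersection_numbers V E b c \<longleftrightarrow>
     (\<forall>v\<in>V. \<forall>w\<in>V.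
        card {x\<in>V. E w x \<and> gdist E v x = gdist E v w + 1} = b (gdist E v w) \<and>
        (gdist E v w \<ge> 1 \<longrightarrow>
           card {x\<in>V. E w x \<and> gdist E v x = gdist E v w - 1} = c (gdist E v w)))"

definition distance_regular_graph ::
  "'v set \<Rightarrow> ('v \<Rightarrow> 'v \<Rightarrow> bool) \<Rightarrow> (nat \<Rightarrow> nat) \<Rightarrow> (nat \<Rightarrow> nat) \<Rightarrow> bool" where
  "distance_regular_graph V E b c \<longleftrightarrow>
     simple_graph V E \<and> connected_graph V E \<and> V \<noteq> {} \<and>
     (\<exists>d. regular_graph V E d) \<and> intersection_numbers V E b c"

definition has_cycle_of_length :: "('v \<Rightarrow> 'v \<Rightarrow> bool) \<Rightarrow> nat \<Rightarrow> bool" where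
  "has_cycle_of_length E k \<longleftrightarrow> 3 \<le> k \<and>
     (\<exists>xs. length xs = k \<and> distinct xs \<and> (\<forall>i<k. E (xs ! i) (xs ! ((i + 1) mod k))))"

definition girth_at_least :: "('v \<Rightarrow> 'v \<Rightarrow> bool) \<Rightarrow> nat \<Rightarrow> bool" where
  "girth_at_least E m \<longleftrightarrow> (\<forall>k. has_cycle_of_length E k \<longrightarrow> m \<le> k)"

text \<open>A unital (complex) C*-algebra, carried by a real unital Banach algebra type 'a,
  with a central element iota (iota^2 = -1) giving the complex scalar multiplication
  (a + ib) x := a x + b (iota x), an involution st, and the C*-identity.\<close>
definition cstar_algebra :: "('a::{real_normed_algebra_1,banach} \<Rightarrow> 'a) \<Rightarrow> 'a \<Rightarrow> bool" where
  "cstar_algebra st iota \<longleftrightarrow>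
     (\<forall>x. iota * x = x * iota) \<and> iota * iota = -1 \<and>
     (\<forall>(a::real) (b::real) x. norm (a *\<^sub>R x + b *\<^sub>R (iota * x)) = sqrt (a\<^sup>2 + b\<^sup>2) * norm x) \<and>
     (\<forall>x. st (st x) = x) \<and> (\<forall>x y. st (x + y) = st x + st y) \<and>
     (\<forall>(a::real) x. st (a *\<^sub>R x) = a *\<^sub>R st x) \<and> st iota = - iota \<and>
     (\<forall>x y. st (x * y) = st y * st x) \<and>
     (\<forall>x. norm (st x * x) = (norm x)\<^sup>2)"

text \<open>A family u satisfying the defining relations (R1)-(R3) of C(G_aut^+(Gamma)).\<close>
definition qaut_relations ::
  "'v set \<Rightarrow> ('v \<Rightarrow> 'v \<Rightarrow> bool) \<Rightarrow> ('a::{real_normed_algebra_1,banach} \<Rightarrow> 'a) \<Rightarrow> ('v \<Rightarrow> 'v \<Rightarrow> 'a) \<Rightarrow> bool" where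
  "qaut_relations V E st u \<longleftrightarrow>
     (\<forall>i\<in>V. \<forall>j\<in>V. u i j = st (u i j) \<and> u i j = u i j * u i j) \<and>
     (\<forall>i\<in>V. (\<Sum>l\<in>V. u i l) = 1 \<and> (\<Sum>l\<in>V. u l i) = 1) \<and>
     (\<forall>i\<in>V. \<forall>j\<in>V. \<forall>k\<in>V. \<forall>l\<in>V. (E i k \<noteq> E j l) \<longrightarrow>
        u i j * u k l = 0 \<and> u k l * u i j = 0)"

end

(* Entries u_ts and u_t's' multiply to 0 unless d(t,t') = d(s,s'): by induction on d(t,t'),
   inserting the row sum of a neighbour of t' on a geodesic from t.  More generally, inserting a
   row sum between two factors kills all terms but one whenever the graph forces a unique
   vertex, and girth >= 7 supplies these uniqueness statements.  For m other than j and q with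
   d(l,m) = 3 this rewrites u_ij u_kl u_im as u_ij u_ax u_kl u_ap u_im, where a is the neighbour
   of i towards k and p the neighbour of m towards l; since p <> x, the middle factor
   u_ax u_kl u_ap vanishes.  If d(l,m) <> 3, already u_kl u_im = 0.  Summing over the row of i
   gives the claim. *)

theory Submission
  imports Defs
begin

lemma eq_0_if_eq_of_nat_mult:
  fixes X :: "'a::real_algebra_1"
  assumes "X = of_nat n * X" "n \<noteq> 1"
  shows "X = 0"
proof -
  have "(real n - 1) *\<^sub>R X = 0"
    using assms(1) by (simp add: scaleR_conv_of_real algebra_simps)
  then show ?thesis using assms(2) by simp
qed

locale simple_connected_graph =
  fixes V :: "'v set" and E :: "'v \<Rightarrow> 'v \<Rightarrow> bool"
  assumes simple: "simple_graph V E" and connected: "connected_graph V E"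
begin

lemma finite_V: "finite V"
  and adj_in_V: "E a b \<Longrightarrow> a \<in> V" "E a b \<Longrightarrow> b \<in> V"
  and adj_sym: "E a b \<Longrightarrow> E b a"
  and adj_irrefl: "\<not> E a a"
  using simple unfolding simple_graph_def by auto

lemma relpowp_adj_sym: "(E ^^ n) a b \<Longrightarrow> (E ^^ n) b a"
proof (induction n arbitrary: b)
  case (Suc n)
  then obtain c where "(E ^^ n) a c" "E c b" by (auto elim: relpowp_Suc_E)
  with Suc.IH show ?case by (meson adj_sym relpowp_Suc_I2)
qed simp

lemma gdist_walk: "v \<in> V \<Longrightarrow> w \<in> V \<Longrightarrow> (E ^^ gdist E v w) v w"
  using connected unfolding gdist_def connected_graph_def by (metis LeastI_ex)

lemma gdist_le: "(E ^^ n) v w \<Longrightarrow> gdist E v w \<le> n"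
  unfolding gdist_def by (rule Least_le)

lemma gdist_self [simp]: "gdist E v v = 0"
  using gdist_le[of 0 v v] by simp

lemma gdist_eq_0: "v \<in> V \<Longrightarrow> w \<in> V \<Longrightarrow> gdist E v w = 0 \<Longrightarrow> v = w"
  using gdist_walk[of v w] by simp

lemma gdist_sym: "v \<in> V \<Longrightarrow> w \<in> V \<Longrightarrow> gdist E v w = gdist E w v"
  by (meson antisym gdist_le gdist_walk relpowp_adj_sym)

lemma gdist_adj: "E v w \<Longrightarrow> gdist E v w = 1"
proof -
  assume e: "E v w"
  then have "gdist E v w \<le> 1" using gdist_le[of 1 v w] by (simp add: relcompp_apply)
  moreover have "v \<noteq> w" using e adj_irrefl by blast
  then have "gdist E v w \<noteq> 0" using gdist_eq_0 e adj_in_V by blast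
  ultimately show ?thesis by simp
qed

lemma adj_if_gdist_1: "v \<in> V \<Longrightarrow> w \<in> V \<Longrightarrow> gdist E v w = 1 \<Longrightarrow> E v w"
  using gdist_walk[of v w] by (simp add: relcompp_apply)

lemma gdist_adj_le: "v \<in> V \<Longrightarrow> E w w' \<Longrightarrow> gdist E v w' \<le> gdist E v w + 1"
  by (metis Suc_eq_plus1 adj_in_V(1) gdist_le gdist_walk relpowp_Suc_I)

lemma gdist_Suc_first_step:
  assumes "v \<in> V" "w \<in> V" "gdist E v w = Suc n"
  obtains c where "E v c" "gdist E c w = n"
proof -
  have "(E ^^ Suc n) v w" using gdist_walk assms by metis
  then obtain c where c: "E v c" "(E ^^ n) c w" using relpowp_Suc_D2 by metis
  have "gdist E w v \<le> gdist E w c + 1" using gdist_adj_le assms(2) adj_sym[OF c(1)] .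
  moreover have "gdist E w v = gdist E v w" "gdist E w c = gdist E c w"
    using assms gdist_sym adj_in_V(2)[OF c(1)] by auto
  ultimately have "gdist E c w = n" using gdist_le[OF c(2)] assms(3) by linarith
  with c(1) show thesis by (rule that)
qed

lemma gdist_2_path:
  assumes "v \<in> V" "w \<in> V" "gdist E v w = 2"
  obtains c where "E v c" "E c w"
proof -
  from assms(3) have "gdist E v w = Suc 1" by simp
  then obtain c where c: "E v c" "gdist E c w = 1"
    using gdist_Suc_first_step[OF assms(1,2)] by blast
  then have "E c w" using adj_if_gdist_1 adj_in_V(2) assms(2) by blast
  with c(1) show thesis by (rule that)
qed

lemma gdist_Suc_last_step:
  assumes "v \<in> V" "w \<in> V" "gdist E v w = Suc n"
  obtains c where "E c w" "gdist E v c = n"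
  using gdist_Suc_first_step[of w v n] assms gdist_sym adj_sym adj_in_V by metis

end

locale cubic_girth7_graph = simple_connected_graph +
  assumes cubic: "regular_graph V E 3" and girth: "girth_at_least E 7"
begin

lemma cycle_length_ge_7:
  assumes "distinct xs" "3 \<le> length xs" "successively E (xs @ [hd xs])"
  shows "7 \<le> length xs"
proof -
  have "E (xs ! n) (xs ! ((n + 1) mod length xs))" if n: "n < length xs" for n
  proof -
    have step: "E ((xs @ [hd xs]) ! n) ((xs @ [hd xs]) ! Suc n)"
      using successively_nth[OF assms(3)] n by simp
    show ?thesis
    proof (cases "Suc n < length xs")
      case True
      with step show ?thesis by (simp add: nth_append)
    next
      case False
      then have last: "Suc n = length xs" using n by simp
      then have "(n + 1) mod length xs = 0" by simp
      moreover have "hd xs = xs ! 0" using assms(2) by (cases xs) auto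
      ultimately show ?thesis using step last by (simp add: nth_append)
    qed
  qed
  then have "has_cycle_of_length E (length xs)"
    using assms(1,2) unfolding has_cycle_of_length_def by blast
  then show ?thesis using girth unfolding girth_at_least_def by blast
qed

lemma no_triangle: "E a b \<Longrightarrow> E b c \<Longrightarrow> E c a \<Longrightarrow> False"
  using cycle_length_ge_7[of "[a, b, c]"] adj_irrefl by auto

lemma no_4_cycle: "E a b \<Longrightarrow> E b c \<Longrightarrow> E c e \<Longrightarrow> E e a \<Longrightarrow> a \<noteq> c \<Longrightarrow> b \<noteq> e \<Longrightarrow> False"
  using cycle_length_ge_7[of "[a, b, c, e]"] adj_irrefl by auto

lemma no_6_cycle:
  "E a\<^sub>1 a\<^sub>2 \<Longrightarrow> E a\<^sub>2 a\<^sub>3 \<Longrightarrow> E a\<^sub>3 a\<^sub>4 \<Longrightarrow> E a\<^sub>4 a\<^sub>5 \<Longrightarrow> E a\<^sub>5 a\<^sub>6 \<Longrightarrow> E a\<^sub>6 a\<^sub>1 \<Longrightarrow>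
   distinct [a\<^sub>1, a\<^sub>2, a\<^sub>3, a\<^sub>4, a\<^sub>5, a\<^sub>6] \<Longrightarrow> False"
  using cycle_length_ge_7[of "[a\<^sub>1, a\<^sub>2, a\<^sub>3, a\<^sub>4, a\<^sub>5, a\<^sub>6]"] by simp

lemma neighbours_card: "v \<in> V \<Longrightarrow> card {w\<in>V. E v w} = 3"
  using cubic unfolding regular_graph_def by blast

lemma neighbour_cases:
  assumes "E v a" "E v b" "E v c" "distinct [a, b, c]" "E v w"
  shows "w = a \<or> w = b \<or> w = c"
proof -
  have "{a, b, c} \<subseteq> {w\<in>V. E v w}" using assms adj_in_V by auto
  moreover have "card {a, b, c} = card {w\<in>V. E v w}"
    using assms neighbours_card adj_in_V by auto
  ultimately have "{a, b, c} = {w\<in>V. E v w}"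
    using finite_V by (simp add: card_subset_eq)
  then show ?thesis using assms adj_in_V by blast
qed

lemma common_neighbour_unique: "E a s \<Longrightarrow> E s c \<Longrightarrow> E a t \<Longrightarrow> E t c \<Longrightarrow> a \<noteq> c \<Longrightarrow> s = t"
  using no_4_cycle adj_sym by metis

lemma gdist_3_neighbour_unique:
  assumes v: "v \<in> V" and "w \<in> V" "gdist E v w = 3"
    and "E w s" "E w s'" "gdist E v s = 2" "gdist E v s' = 2"
  shows "s = s'"
proof (rule ccontr)
  assume "s \<noteq> s'"
  have "s \<in> V" "s' \<in> V" using assms(4,5) adj_in_V by auto
  obtain c where c: "E v c" "E c s" using gdist_2_path[OF v \<open>s \<in> V\<close> assms(6)] .
  obtain c' where c': "E v c'" "E c' s'" using gdist_2_path[OF v \<open>s' \<in> V\<close> assms(7)] .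
  have "gdist E v c = 1" "gdist E v c' = 1" using gdist_adj c c' by auto
  show False
  proof (cases "c = c'")
    case True
    have "c \<noteq> w" using \<open>gdist E v c = 1\<close> assms(3) by auto
    then show False
      using no_4_cycle[of c s w s'] True c(2) c'(2) assms(4,5) adj_sym \<open>s \<noteq> s'\<close> by blast
  next
    case False
    have "distinct [v, c, s, w, s', c']"
      using False \<open>s \<noteq> s'\<close> \<open>gdist E v c = 1\<close> \<open>gdist E v c' = 1\<close> assms(3,6,7) by auto
    then show False
      using no_6_cycle[of v c s w s' c'] assms(4,5) c c' adj_sym by blast
  qed
qed

lemma neighbour_at_gdist_3_cases:
  assumes "l \<in> V" "gdist E x l = 2" "E x j" "E x q" "j \<noteq> q"
    and "gdist E j l = 3" "gdist E q l = 3" "E x m" "gdist E m l = 3"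
  shows "m = j \<or> m = q"
proof -
  have "x \<in> V" using assms(3) adj_in_V by auto
  obtain y where y: "E x y" "E y l" using gdist_2_path[OF \<open>x \<in> V\<close> assms(1,2)] .
  have "gdist E y l = 1" using gdist_adj[OF y(2)] .
  then have "distinct [j, q, y]" using assms(5-7) by auto
  then show ?thesis using neighbour_cases[OF assms(3,4) y(1) _ assms(8)] assms(9) \<open>gdist E y l = 1\<close>
    by auto
qed

lemma gdist_2_from_two_neighbours_eq:
  assumes "E y x" "E y p" "E y l" "distinct [x, p, l]"
    and "l' \<in> V" "gdist E x l' = 2" "gdist E p l' = 2"
  shows "l' = l"
proof (rule ccontr)
  assume "l' \<noteq> l"
  have "x \<in> V" "p \<in> V" using assms(1,2) adj_in_V by auto
  obtain w where w: "E x w" "E w l'" using gdist_2_path[OF \<open>x \<in> V\<close> assms(5,6)] .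
  obtain w' where w': "E p w'" "E w' l'" using gdist_2_path[OF \<open>p \<in> V\<close> assms(5,7)] .
  have not_y: "z \<noteq> y" if "E z l'" for z
    using neighbour_cases[OF assms(1-4)] that adj_sym assms(6,7) \<open>l' \<noteq> l\<close> by force
  show False
  proof (cases "w = w'")
    case True
    then show False
      using no_4_cycle[of x y p w] assms(1,2,4) w w' adj_sym not_y by auto
  next
    case False
    have "y \<noteq> l'" using gdist_adj[OF adj_sym[OF assms(1)]] assms(6) by auto
    moreover have "x \<noteq> w'" "p \<noteq> w" using no_triangle assms(1,2) w w' adj_sym by blast+
    ultimately have "distinct [x, y, p, w', l', w]"
      using False not_y assms adj_irrefl w w' by auto
    then show False using no_6_cycle[of x y p w' l' w] assms(1,2) w w' adj_sym by blast
  qed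
qed

end

text \<open>Only (R2) and the vanishing products of (R3) are assumed: orthogonality of the entries of
  a row, usually a consequence of (R1) and positivity, follows here from the degree and the
  girth (\<open>row_orthogonal\<close>).\<close>
locale cubic_girth7_qaut = cubic_girth7_graph +
  fixes u :: "'v \<Rightarrow> 'v \<Rightarrow> 'a::real_algebra_1"
  assumes row_sum: "i \<in> V \<Longrightarrow> (\<Sum>l\<in>V. u i l) = 1"
    and col_sum: "i \<in> V \<Longrightarrow> (\<Sum>l\<in>V. u l i) = 1"
    and mult_zero_if_adj_ne:
      "i \<in> V \<Longrightarrow> j \<in> V \<Longrightarrow> k \<in> V \<Longrightarrow> l \<in> V \<Longrightarrow> E i k \<noteq> E j l \<Longrightarrow> u i j * u k l = 0"
begin

lemma transpose: "cubic_girth7_qaut V E (\<lambda>a b. u b a)"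
proof unfold_locales
  show "i \<in> V \<Longrightarrow> (\<Sum>l\<in>V. u l i) = 1" for i by (rule col_sum)
  show "i \<in> V \<Longrightarrow> (\<Sum>l\<in>V. u i l) = 1" for i by (rule row_sum)
  show "u j i * u l k = 0" if "i \<in> V" "j \<in> V" "k \<in> V" "l \<in> V" "E i k \<noteq> E j l" for i j k l
    using mult_zero_if_adj_ne[of j i l k] that by metis
qed

lemma mult_eq_sum_row:
  assumes "t \<in> V" shows "A * B = (\<Sum>s\<in>V. A * u t s * B)"
proof -
  have "A * B = A * (\<Sum>s\<in>V. u t s) * B" using row_sum[OF assms] by simp
  also have "\<dots> = (\<Sum>s\<in>V. A * u t s * B)" by (simp add: sum_distrib_left sum_distrib_right)
  finally show ?thesis .
qed

lemma mult_eq_sum_col: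
  assumes "s \<in> V" shows "A * B = (\<Sum>t\<in>V. A * u t s * B)"
proof -
  have "A * B = A * (\<Sum>t\<in>V. u t s) * B" using col_sum[OF assms] by simp
  also have "\<dots> = (\<Sum>t\<in>V. A * u t s * B)" by (simp add: sum_distrib_left sum_distrib_right)
  finally show ?thesis .
qed

lemma mult_eq_insert:
  assumes "t \<in> V" "s\<^sub>0 \<in> V" "\<And>s. s \<in> V \<Longrightarrow> s \<noteq> s\<^sub>0 \<Longrightarrow> A * u t s * B = 0"
  shows "A * B = A * u t s\<^sub>0 * B"
proof -
  have "A * B = (\<Sum>s\<in>V. A * u t s * B)" by (rule mult_eq_sum_row[OF assms(1)])
  also have "\<dots> = (\<Sum>s\<in>{s\<^sub>0}. A * u t s * B)"
    by (rule sum.mono_neutral_right) (use finite_V assms in auto)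
  finally show ?thesis by simp
qed

lemma mult_zero_unless_path:
  assumes "E t c" "E c t'" "s \<in> V" "z \<in> V" "s' \<in> V" "\<not> (E s z \<and> E z s')"
  shows "u t s * u c z * u t' s' = 0"
proof (cases "E s z")
  case True
  then have "u c z * u t' s' = 0"
    using mult_zero_if_adj_ne[of c z t' s'] assms adj_in_V by auto
  then show ?thesis by (simp add: mult.assoc)
next
  case False
  then have "u t s * u c z = 0"
    using mult_zero_if_adj_ne[of t s c z] assms adj_in_V by auto
  then show ?thesis by simp
qed

lemma mult_eq_insert_common_neighbour:
  assumes "E t c" "E c t'" "s \<noteq> s'" "E s w" "E w s'"
  shows "u t s * u t' s' = u t s * u c w * u t' s'"
proof (rule mult_eq_insert)
  show "c \<in> V" "w \<in> V" using assms adj_in_V by auto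
  fix z assume z: "z \<in> V" "z \<noteq> w"
  have "\<not> (E s z \<and> E z s')" using common_neighbour_unique[of s z s' w] assms z(2) by blast
  then show "u t s * u c z * u t' s' = 0"
    using mult_zero_unless_path[OF assms(1,2) _ z(1)] adj_in_V assms(4,5) by blast
qed

lemma mult_zero_no_common_neighbour:
  assumes "E t c" "E c t'" "s \<in> V" "s' \<in> V" "\<nexists>w. E s w \<and> E w s'"
  shows "u t s * u t' s' = 0"
proof -
  have "u t s * u c z * u t' s' = 0" if "z \<in> V" for z
    using mult_zero_unless_path[OF assms(1,2,3) that assms(4)] assms(5) by blast
  then have "(\<Sum>z\<in>V. u t s * u c z * u t' s') = 0" by (simp add: sum.neutral)
  then show ?thesis using mult_eq_sum_row[OF adj_in_V(2)[OF assms(1)], of "u t s" "u t' s'"] by simp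
qed

lemma row_orthogonal:
  assumes "i \<in> V" "j \<in> V" "m \<in> V" "j \<noteq> m"
  shows "u i j * u i m = 0"
proof (cases "\<exists>w. E j w \<and> E w m")
  case True
  then obtain w where w: "E j w" "E w m" by blast
  have "u i j * u i m = (\<Sum>t\<in>V. u i j * u t w * u i m)"
    by (rule mult_eq_sum_col[OF adj_in_V(2)[OF w(1)]])
  also have "\<dots> = (\<Sum>t\<in>{t\<in>V. E i t}. u i j * u t w * u i m)"
  proof (rule sum.mono_neutral_right)
    show "\<forall>t\<in>V - {t\<in>V. E i t}. u i j * u t w * u i m = 0"
      using mult_zero_if_adj_ne[of i j _ w] assms adj_in_V(2)[OF w(1)] w(1) by auto
  qed (use finite_V in auto)
  also have "\<dots> = (\<Sum>t\<in>{t\<in>V. E i t}. u i j * u i m)"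
  proof (rule sum.cong)
    fix t assume "t \<in> {t\<in>V. E i t}"
    then show "u i j * u t w * u i m = u i j * u i m"
      using mult_eq_insert_common_neighbour[of i t i j m w] adj_sym assms(4) w by simp
  qed simp
  also have "\<dots> = of_nat 3 * (u i j * u i m)"
    using neighbours_card assms(1) by simp
  finally show ?thesis by (rule eq_0_if_eq_of_nat_mult) simp
next
  case False
  have "{t\<in>V. E i t} \<noteq> {}" using neighbours_card assms(1) by (metis card.empty zero_neq_numeral)
  then obtain t where "E i t" by blast
  then show ?thesis using mult_zero_no_common_neighbour[OF _ adj_sym, of i t i j m] assms(2,3) False
    by blast
qed

lemma mult_zero_if_gdist_less:
  "gdist E t t' = n \<Longrightarrow> n < gdist E s s' \<Longrightarrow> t \<in> V \<Longrightarrow> t' \<in> V \<Longrightarrow> s \<in> V \<Longrightarrow> s' \<in> V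
   \<Longrightarrow> u t s * u t' s' = 0"
proof (induction n arbitrary: t' s')
  case 0
  then have "t = t'" "s \<noteq> s'" using gdist_eq_0 by auto
  with 0 show ?case using row_orthogonal by simp
next
  case (Suc n)
  obtain c where c: "E c t'" "gdist E t c = n"
    using gdist_Suc_last_step[OF Suc.prems(3,4,1)] by blast
  have "u t s * u c z * u t' s' = 0" if "z \<in> V" for z
  proof (cases "E z s'")
    case True
    then have "n < gdist E s z"
      using gdist_adj_le[OF \<open>s \<in> V\<close> True] Suc.prems(2) by simp
    then have "u t s * u c z = 0"
      using Suc.IH[OF c(2) _ Suc.prems(3) adj_in_V(1)[OF c(1)] Suc.prems(5) that] by blast
    then show ?thesis by simp
  next
    case False
    then have "u c z * u t' s' = 0"
      using mult_zero_if_adj_ne[of c z t' s'] c(1) adj_in_V(1)[OF c(1)] Suc.prems(4,6) that by simp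
    then show ?thesis by (simp add: mult.assoc)
  qed
  then have "(\<Sum>z\<in>V. u t s * u c z * u t' s') = 0" by (simp add: sum.neutral)
  then show ?case using mult_eq_sum_row[OF adj_in_V(1)[OF c(1)], of "u t s" "u t' s'"] by simp
qed

lemma mult_zero_if_gdist_ne:
  assumes "t \<in> V" "t' \<in> V" "s \<in> V" "s' \<in> V" "gdist E t t' \<noteq> gdist E s s'"
  shows "u t s * u t' s' = 0"
proof (cases "gdist E t t' < gdist E s s'")
  case True
  then show ?thesis using mult_zero_if_gdist_less[OF refl] assms by blast
next
  case False
  interpret T: cubic_girth7_qaut V E "\<lambda>a b. u b a" by (rule transpose)
  show ?thesis using T.mult_zero_if_gdist_less[OF refl, of s s' t t'] False assms by simp
qed

lemma mult_eq_mult_row_pair: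
  assumes "i \<in> V" "j \<noteq> q" "j \<in> V" "q \<in> V"
    and "\<And>m. m \<in> V \<Longrightarrow> m \<noteq> j \<Longrightarrow> m \<noteq> q \<Longrightarrow> A * u i m = 0"
  shows "A = A * (u i j + u i q)"
proof -
  have "A = A * (\<Sum>m\<in>V. u i m)" using row_sum[OF assms(1)] by simp
  also have "\<dots> = (\<Sum>m\<in>V. A * u i m)" by (rule sum_distrib_left)
  also have "\<dots> = (\<Sum>m\<in>{j, q}. A * u i m)"
    by (rule sum.mono_neutral_right) (use finite_V assms in auto)
  also have "\<dots> = A * (u i j + u i q)" using assms(2) by (simp add: distrib_left)
  finally show ?thesis .
qed

lemma mult_eq_insert_geodesic_left:
  assumes "E t a" "t' \<in> V" "gdist E a t' = 2" "E s w" "s' \<in> V" "gdist E w s' = 2"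
    and "gdist E s s' = 3"
  shows "u t s * u t' s' = u t s * u a w * u t' s'"
proof (rule mult_eq_insert)
  show "a \<in> V" "w \<in> V" using assms(1,4) adj_in_V by auto
  fix z assume z: "z \<in> V" "z \<noteq> w"
  have "s \<in> V" using assms(4) adj_in_V by auto
  show "u t s * u a z * u t' s' = 0"
  proof (cases "E s z")
    case True
    have "gdist E s' s = 3" "gdist E s' w = 2"
      using assms(5,6,7) gdist_sym \<open>s \<in> V\<close> \<open>w \<in> V\<close> by auto
    then have "gdist E s' z \<noteq> 2"
      using gdist_3_neighbour_unique[OF assms(5) \<open>s \<in> V\<close> _ assms(4) True] z(2) by metis
    then have "gdist E a t' \<noteq> gdist E z s'" using assms(3,5) gdist_sym z(1) by simp
    then have "u a z * u t' s' = 0"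
      using mult_zero_if_gdist_ne \<open>a \<in> V\<close> assms(2,5) z(1) by blast
    then show ?thesis by (simp add: mult.assoc)
  next
    case False
    then have "u t s * u a z = 0"
      using mult_zero_if_adj_ne[of t s a z] assms(1) adj_in_V(1)[OF assms(1)] \<open>s \<in> V\<close>
        \<open>a \<in> V\<close> z(1) by simp
    then show ?thesis by simp
  qed
qed

lemma mult_eq_insert_geodesic_right:
  assumes "E a t'" "t \<in> V" "gdist E t a = 2" "E w s'" "s \<in> V" "gdist E s w = 2"
    and "gdist E s s' = 3"
  shows "u t s * u t' s' = u t s * u a w * u t' s'"
proof (rule mult_eq_insert)
  show "a \<in> V" "w \<in> V" using assms(1,4) adj_in_V by auto
  fix z assume z: "z \<in> V" "z \<noteq> w"
  have "s' \<in> V" using assms(4) adj_in_V by auto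
  show "u t s * u a z * u t' s' = 0"
  proof (cases "E z s'")
    case True
    have "gdist E s z \<noteq> 2"
      using gdist_3_neighbour_unique[OF assms(5) \<open>s' \<in> V\<close> assms(7) adj_sym[OF assms(4)]
          adj_sym[OF True] assms(6)] z(2) by metis
    then have "u t s * u a z = 0"
      using mult_zero_if_gdist_ne assms(2,3,5) \<open>a \<in> V\<close> z(1) by metis
    then show ?thesis by simp
  next
    case False
    then have "u a z * u t' s' = 0"
      using mult_zero_if_adj_ne[of a z t' s'] assms(1) adj_in_V(2)[OF assms(1)] \<open>s' \<in> V\<close>
        \<open>a \<in> V\<close> z(1) by simp
    then show ?thesis by (simp add: mult.assoc)
  qed
qed

lemma sandwich_zero_common_neighbour:
  assumes "a \<in> V" "k \<in> V" "gdist E a k = 2"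
    and "E y x" "E y p" "E y l" "distinct [x, p, l]"
  shows "u a x * u k l * u a p = 0"
proof -
  have V: "x \<in> V" "p \<in> V" "l \<in> V" using assms(4-6) adj_in_V by auto
  have "u a x * u a p = u a x * u k l * u a p"
  proof (rule mult_eq_insert[OF assms(2) V(3)])
    fix l' assume l': "l' \<in> V" "l' \<noteq> l"
    show "u a x * u k l' * u a p = 0"
    proof (cases "gdist E x l' = 2")
      case True
      then have "gdist E l' p \<noteq> 2"
        using gdist_2_from_two_neighbours_eq[OF assms(4-7) l'(1)] l'(2) gdist_sym V(2) l'(1)
        by metis
      then have "u k l' * u a p = 0"
        using mult_zero_if_gdist_ne[OF assms(2,1) l'(1) V(2)] assms(1-3) gdist_sym by metis
      then show ?thesis by (simp add: mult.assoc)
    next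
      case False
      then have "u a x * u k l' = 0"
        using mult_zero_if_gdist_ne[OF assms(1,2) V(1) l'(1)] assms(3) by metis
      then show ?thesis by simp
    qed
  qed
  moreover have "u a x * u a p = 0" using row_orthogonal assms(1,7) V by simp
  ultimately show ?thesis by simp
qed

lemma sandwich_zero:
  assumes "a \<in> V" "k \<in> V" "gdist E a k = 2"
    and "x \<in> V" "p \<in> V" "l \<in> V" "x \<noteq> p" "gdist E x l = 2" "gdist E p l = 2"
  shows "u a x * u k l * u a p = 0"
proof -
  obtain b where b: "E a b" "E b k" using gdist_2_path[OF assms(1-3)] .
  obtain y where y: "E x y" "E y l" using gdist_2_path[OF assms(4,6,8)] .
  obtain r where r: "E p r" "E r l" using gdist_2_path[OF assms(5,6,9)] .
  have "x \<noteq> l" "p \<noteq> l" using assms(8,9) by auto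
  show ?thesis
  proof (cases "r = y")
    case True
    then have "E y p" using r(1) adj_sym by blast
    then show ?thesis
      using sandwich_zero_common_neighbour[OF assms(1-3) adj_sym[OF y(1)] _ y(2)] assms(7)
        \<open>x \<noteq> l\<close> \<open>p \<noteq> l\<close> by simp
  next
    case False
    have "u a x * u k l = u a x * u b y * u k l"
      using mult_eq_insert_common_neighbour b y \<open>x \<noteq> l\<close> by blast
    moreover have "u k l * u a p = u k l * u b r * u a p"
      using mult_eq_insert_common_neighbour adj_sym b r \<open>p \<noteq> l\<close> by metis
    moreover have "u b y * u k l * u b r = 0"
    proof -
      have "u b y * u b r = u b y * u k l * u b r"
        using mult_eq_insert_common_neighbour adj_sym b(2) y(2) r(2) False by metis
      moreover have "u b y * u b r = 0"
        using row_orthogonal adj_in_V b(1) y(2) r(2) False by metis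
      ultimately show ?thesis by simp
    qed
    ultimately show ?thesis by (metis mult.assoc mult_zero_left mult_zero_right)
  qed
qed

lemma mult_zero_off_pair:
  assumes "i \<in> V" "k \<in> V" "l \<in> V" "m \<in> V" "gdist E i k = 3" "gdist E j l = 3"
    and "E j x" "gdist E x l = 2" "E x q" "j \<noteq> q" "gdist E q l = 3" "m \<noteq> j" "m \<noteq> q"
  shows "u i j * u k l * u i m = 0"
proof (cases "gdist E l m = 3")
  case False
  then have "u k l * u i m = 0"
    using mult_zero_if_gdist_ne[OF assms(2,1,3,4)] assms(1,2,5) gdist_sym by metis
  then show ?thesis by (simp add: mult.assoc)
next
  case True
  have "x \<in> V" using assms(7) adj_in_V by auto
  have "gdist E i k = Suc 2" using assms(5) by simp
  then obtain a where a: "E i a" "gdist E a k = 2"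
    using gdist_Suc_first_step[OF assms(1,2)] by blast
  have "gdist E m l = Suc 2" using True gdist_sym assms(3,4) by simp
  then obtain p where p: "E m p" "gdist E p l = 2"
    using gdist_Suc_first_step[OF assms(4,3)] by blast
  have "p \<noteq> x"
  proof
    assume "p = x"
    then show False
      using neighbour_at_gdist_3_cases[OF assms(3,8) adj_sym[OF assms(7)] assms(9,10,6,11)]
        adj_sym[OF p(1)] \<open>gdist E m l = Suc 2\<close> assms(12,13) by fastforce
  qed
  have V: "a \<in> V" "p \<in> V" using a p adj_in_V by auto
  have "u i j * u k l = u i j * u a x * u k l"
    by (rule mult_eq_insert_geodesic_left[OF a(1) assms(2) a(2) assms(7,3,8,6)])
  moreover have "u k l * u i m = u k l * u a p * u i m"
    using mult_eq_insert_geodesic_right[OF adj_sym[OF a(1)] assms(2) _ adj_sym[OF p(1)] assms(3)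
        _ True] a(2) p(2) gdist_sym assms(2,3) V by simp
  moreover have "u a x * u k l * u a p = 0"
    using sandwich_zero[OF V(1) assms(2) a(2) \<open>x \<in> V\<close> V(2) assms(3) _ assms(8) p(2)]
      \<open>p \<noteq> x\<close> by blast
  ultimately show ?thesis by (metis mult.assoc mult_zero_left mult_zero_right)
qed

end

theorem lemma5p5:
  fixes V :: "'v set" and E :: "'v \<Rightarrow> 'v \<Rightarrow> bool"
    and b c :: "nat \<Rightarrow> nat"
    and i j k l x q :: 'v
    and st :: "'a::{real_normed_algebra_1,banach} \<Rightarrow> 'a" and iota :: 'a
    and u :: "'v \<Rightarrow> 'v \<Rightarrow> 'a"
  assumes drg: "distance_regular_graph V E b c"
    and cubic: "regular_graph V E 3"
    and size: "card V \<ge> 10"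
    and diam: "diameter V E \<ge> 3"
    and b2: "b 2 = 2"
    and girth: "girth_at_least E 7"
    and verts: "i \<in> V" "j \<in> V" "k \<in> V" "l \<in> V"
    and dik: "gdist E i k = 3" and djl: "gdist E j l = 3"
    and x: "x \<in> V" "E j x" "gdist E x l = 2"
    and q: "q \<in> V" "E x q" "gdist E q j = 2" "gdist E q l = 3"
    and cstar: "cstar_algebra st iota"
    and rel: "qaut_relations V E st u"
  shows "u i j * u k l = u i j * u k l * (u i j + u i q)"
proof -
  interpret cubic_girth7_qaut V E u
  proof unfold_locales
    show "simple_graph V E" "connected_graph V E"
      using drg unfolding distance_regular_graph_def by auto
  qed (use cubic girth rel in \<open>auto simp: qaut_relations_def\<close>)
  have "j \<noteq> q" using q(3) by auto
  then show ?thesis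
    using mult_eq_mult_row_pair[OF verts(1) _ verts(2) q(1)]
      mult_zero_off_pair[OF verts(1,3,4) _ dik djl x(2,3) q(2) _ q(4)] by blast
qed

end
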